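(* Let $d,m\ge 1$ and, for each $u\in\mathbb{R}$ and $\mu\in\{1,\ldots,m\}$, let $M_\mu^u\in\mathbb{C}^{d\times d}$ be matrices with $\sum_{\mu=1}^m (M_\mu^u)^\dagger M_\mu^u=\mathrm{I}$ for every $u$, such that each $u\mapsto M_\mu^u$ is of class $C^2$, and such that for $u=0$ all $M_\mu^0$ are diagonal in a common orthonormal basis $\{|n\rangle : n=1,\ldots,d\}$ of $\mathbb{C}^d$: $M_\mu^0=\sum_{n=1}^d c_{\mu,n}|n\rangle\langle n|$ with $c_{\mu,n}\in\mathbb{C}$. Define the $d\times d$ real matrix $R$ by $$R_{n_1,n_2}=\sum_{\mu=1}^m\Big(2\Big|\langle n_1|\tfrac{d (M_\mu^u)^\dagger}{du}\big|_{u=0}|n_2\rangle\Big|^2+2\delta_{n_1,n_2}\,\mathrm{Re}\Big(c_{\mu,n_1}\langle n_1|\tfrac{d^2 (M_\mu^u)^\dagger}{du^2}\big|_{u=0}|n_2\rangle\Big)\Big).$$ If $R\neq 0$, then $P=\mathrm{I}-R/\mathrm{tr}(R)$ is well defined, has non-negative entries, and is a right stochastic matrix (each row sums to $1$).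
   Context: $\mathrm{I}$ denotes the identity matrix, $\dagger$ the conjugate transpose, $\delta$ the Kronecker delta. *)

theory Defs
  imports "HOL-Analysis.Analysis"
begin

definition cadj :: "complex^'n^'n \<Rightarrow> complex^'n^'n" where
  "cadj A = (\<chi> i j. cnj (A $ j $ i))"

definition cinner :: "complex^'n \<Rightarrow> complex^'n \<Rightarrow> complex" where
  "cinner x y = (\<Sum>i\<in>UNIV. cnj (x $ i) * y $ i)"

definition braket :: "complex^'n \<Rightarrow> complex^'n^'n \<Rightarrow> complex^'n \<Rightarrow> complex" where
  "braket x A y = cinner x (A *v y)"

definition ketbra :: "complex^'n \<Rightarrow> complex^'n \<Rightarrow> complex^'n^'n" where
  "ketbra x y = (\<chi> i j. x $ i * cnj (y $ j))"

definition cscale :: "complex \<Rightarrow> complex^'n^'n \<Rightarrow> complex^'n^'n" where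
  "cscale c A = (\<chi> i j. c * A $ i $ j)"

end

theory Submission
  imports Defs
begin

text \<open>Differentiating the completeness relation \<open>\<Sum>\<^sub>\<mu> M\<^sub>\<mu>\<^sup>\<dagger> M\<^sub>\<mu> = I\<close> twice gives
  \<open>\<Sum>\<^sub>\<mu> (M\<^sub>\<mu>''\<^sup>\<dagger> M\<^sub>\<mu> + 2 M\<^sub>\<mu>'\<^sup>\<dagger> M\<^sub>\<mu>' + M\<^sub>\<mu>\<^sup>\<dagger> M\<^sub>\<mu>'') = 0\<close>. Taking the expectation value in
  \<open>|n\<^sub>1\<rangle>\<close>, an eigenvector of every \<open>M\<^sub>\<mu>\<^sup>0\<close>, and expanding \<open>\<parallel>M\<^sub>\<mu>' |n\<^sub>1\<rangle>\<parallel>\<^sup>2\<close> in the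
  basis shows that each row of \<open>R\<close> sums to zero. Its off-diagonal entries are manifestly
  non-negative, so \<open>R\<close> is a transition rate matrix: its diagonal, hence its trace, is
  non-positive, and the trace vanishes only if \<open>R = 0\<close>. Normalising by \<open>-tr R \<ge> -R\<^sub>i\<^sub>i\<close> then
  yields a stochastic matrix.\<close>

lemma bounded_linear_cadj: "bounded_linear (cadj :: complex^'n^'n \<Rightarrow> complex^'n^'n)"
  unfolding linear_conv_bounded_linear[symmetric]
  by (rule linearI) (simp_all add: cadj_def vec_eq_iff)

lemma bounded_bilinear_matrix_mult:
  "bounded_bilinear ((**) :: complex^'n^'n \<Rightarrow> complex^'n^'n \<Rightarrow> complex^'n^'n)"
  unfolding bilinear_conv_bounded_bilinear[symmetric] bilinear_def
  by (auto intro!: linearI simp: matrix_matrix_mult_def vec_eq_iff algebra_simps sum.distrib scaleR_sum_right)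

lemma has_vector_derivative_cadj_mult:
  fixes F G :: "real \<Rightarrow> complex^'n^'n"
  assumes "(F has_vector_derivative F') (at u)" and "(G has_vector_derivative G') (at u)"
  shows "((\<lambda>u. cadj (F u) ** G u) has_vector_derivative cadj (F u) ** G' + cadj F' ** G u) (at u)"
  using bounded_bilinear.has_vector_derivative[OF bounded_bilinear_matrix_mult
      bounded_linear.has_vector_derivative[OF bounded_linear_cadj assms(1)] assms(2)] .

lemma gram_sum_second_derivative_eq_0:
  fixes F F1 F2 :: "'m::finite \<Rightarrow> real \<Rightarrow> complex^'n^'n"
  assumes const: "\<And>u. (\<Sum>\<mu>\<in>UNIV. cadj (F \<mu> u) ** F \<mu> u) = K"
    and deriv1: "\<And>\<mu> u. (F \<mu> has_vector_derivative F1 \<mu> u) (at u)"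
    and deriv2: "\<And>\<mu> u. (F1 \<mu> has_vector_derivative F2 \<mu> u) (at u)"
  shows "(\<Sum>\<mu>\<in>UNIV. cadj (F2 \<mu> u) ** F \<mu> u + 2 *\<^sub>R (cadj (F1 \<mu> u) ** F1 \<mu> u)
            + cadj (F \<mu> u) ** F2 \<mu> u) = 0"
proof -
  define D where "D u = (\<Sum>\<mu>\<in>UNIV. cadj (F \<mu> u) ** F1 \<mu> u + cadj (F1 \<mu> u) ** F \<mu> u)" for u
  have "((\<lambda>u. \<Sum>\<mu>\<in>UNIV. cadj (F \<mu> u) ** F \<mu> u) has_vector_derivative D u) (at u)" for u
    unfolding D_def by (intro has_vector_derivative_sum has_vector_derivative_cadj_mult deriv1)
  then have D_0: "D u = 0" for u
    using vector_derivative_unique_at has_vector_derivative_const unfolding const by metis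
  have "(D has_vector_derivative (\<Sum>\<mu>\<in>UNIV. (cadj (F \<mu> u) ** F2 \<mu> u + cadj (F1 \<mu> u) ** F1 \<mu> u)
          + (cadj (F1 \<mu> u) ** F1 \<mu> u + cadj (F2 \<mu> u) ** F \<mu> u))) (at u)"
    unfolding D_def
    by (intro has_vector_derivative_sum has_vector_derivative_add has_vector_derivative_cadj_mult
        deriv1 deriv2)
  moreover have "(D has_vector_derivative 0) (at u)"
    using D_0 has_vector_derivative_const by (metis ext)
  ultimately show ?thesis
    using vector_derivative_unique_at by (fastforce simp: scaleR_2 algebra_simps)
qed

lemma cnj_cinner: "cnj (cinner x y) = cinner y x"
  by (simp add: cinner_def mult.commute)

lemma cinner_scale_right: "cinner x (c *s y) = c * cinner x y"
  by (simp add: cinner_def sum_distrib_left mult_ac)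

lemma cinner_cadj: "cinner x (cadj A *v y) = cinner (A *v x) y"
proof -
  have "cinner x (cadj A *v y) = (\<Sum>i\<in>UNIV. \<Sum>j\<in>UNIV. cnj (A $ j $ i * x $ i) * y $ j)"
    by (simp add: cinner_def cadj_def matrix_vector_mult_def sum_distrib_left mult_ac)
  also have "\<dots> = cinner (A *v x) y"
    by (subst sum.swap) (simp add: cinner_def matrix_vector_mult_def cnj_sum sum_distrib_right)
  finally show ?thesis .
qed

lemma braket_cadj: "braket x (cadj A) y = cnj (braket y A x)"
  by (simp add: braket_def cinner_cadj cnj_cinner)

lemma braket_cadj_mult: "braket x (cadj A ** B) y = cinner (A *v x) (B *v y)"
  by (simp add: braket_def matrix_vector_mul_assoc[symmetric] cinner_cadj)

lemma braket_add: "braket x (A + B) y = braket x A y + braket x B y"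
  by (simp add: braket_def cinner_def matrix_vector_mult_add_rdistrib algebra_simps sum.distrib)

lemma braket_scaleR: "braket x (r *\<^sub>R A) y = r *\<^sub>R braket x A y"
  by (simp add: braket_def cinner_def matrix_vector_mult_def scaleR_sum_right sum_distrib_left)

lemma braket_zero [simp]: "braket x 0 y = 0"
  by (simp add: braket_def cinner_def)

lemma braket_sum: "braket x (\<Sum>\<mu>\<in>S. A \<mu>) y = (\<Sum>\<mu>\<in>S. braket x (A \<mu>) y)"
  by (induction S rule: infinite_finite_induct) (simp_all add: braket_add)

lemma orthonormal_basis_resolution_of_identity:
  fixes b :: "'n \<Rightarrow> complex^'n"
  assumes orthonormal: "\<And>i j. cinner (b i) (b j) = (if i = j then 1 else 0)"
  shows "(\<Sum>n\<in>UNIV. b n $ i * cnj (b n $ k)) = (if i = k then 1 else 0)"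
proof -
  define U :: "complex^'n^'n" where "U = (\<chi> i n. b n $ i)"
  have "cadj U ** U = mat 1"
    by (simp add: vec_eq_iff U_def matrix_matrix_mult_def cadj_def mat_def
        orthonormal[unfolded cinner_def])
  then have "U ** cadj U = mat 1"
    using matrix_left_right_inverse by blast
  then have "(U ** cadj U) $ i $ k = mat 1 $ i $ k" by simp
  then show ?thesis by (simp add: U_def matrix_matrix_mult_def cadj_def mat_def)
qed

lemma orthonormal_basis_parseval:
  fixes b :: "'n \<Rightarrow> complex^'n"
  assumes orthonormal: "\<And>i j. cinner (b i) (b j) = (if i = j then 1 else 0)"
  shows "(\<Sum>n\<in>UNIV. cnj (cinner (b n) v) * cinner (b n) w) = cinner v w"
proof -
  have "(\<Sum>n\<in>UNIV. cnj (cinner (b n) v) * cinner (b n) w)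
      = (\<Sum>n\<in>UNIV. \<Sum>k\<in>UNIV. \<Sum>i\<in>UNIV. cnj (v $ i) * w $ k * (b n $ i * cnj (b n $ k)))"
    by (simp add: cinner_def cnj_sum sum_product mult_ac)
  also have "\<dots> = (\<Sum>k\<in>UNIV. \<Sum>n\<in>UNIV. \<Sum>i\<in>UNIV. cnj (v $ i) * w $ k * (b n $ i * cnj (b n $ k)))"
    by (rule sum.swap)
  also have "\<dots> = (\<Sum>k\<in>UNIV. \<Sum>i\<in>UNIV. \<Sum>n\<in>UNIV. cnj (v $ i) * w $ k * (b n $ i * cnj (b n $ k)))"
    by (intro sum.cong refl sum.swap)
  also have "\<dots> = (\<Sum>k\<in>UNIV. \<Sum>i\<in>UNIV. cnj (v $ i) * w $ k * (\<Sum>n\<in>UNIV. b n $ i * cnj (b n $ k)))"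
    by (simp add: sum_distrib_left)
  also have "\<dots> = cinner v w"
    by (simp add: orthonormal_basis_resolution_of_identity[OF orthonormal] cinner_def
        mult_if_delta mult.commute)
  finally show ?thesis .
qed

lemma orthonormal_basis_sum_norm_squares:
  fixes b :: "'n \<Rightarrow> complex^'n"
  assumes orthonormal: "\<And>i j. cinner (b i) (b j) = (if i = j then 1 else 0)"
  shows "of_real (\<Sum>n\<in>UNIV. (cmod (cinner (b n) v))\<^sup>2) = cinner v v"
proof -
  have "of_real (\<Sum>n\<in>UNIV. (cmod (cinner (b n) v))\<^sup>2) = (\<Sum>n\<in>UNIV. cnj (cinner (b n) v) * cinner (b n) v)"
    unfolding of_real_sum complex_norm_square by (simp add: mult.commute)
  also have "\<dots> = cinner v v"
    by (rule orthonormal_basis_parseval[OF orthonormal])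
  finally show ?thesis .
qed

lemma matrix_vector_mult_sum_left: "(\<Sum>n\<in>S. A n) *v x = (\<Sum>n\<in>S. A n *v x)"
  by (induction S rule: infinite_finite_induct) (simp_all add: matrix_vector_mult_add_rdistrib)

lemma ketbra_diagonal_mult_basis:
  fixes b :: "'n \<Rightarrow> complex^'n"
  assumes orthonormal: "\<And>i j. cinner (b i) (b j) = (if i = j then 1 else 0)"
  shows "(\<Sum>n\<in>UNIV. cscale (c n) (ketbra (b n) (b n))) *v b m = c m *s b m"
proof -
  have "(\<Sum>n\<in>UNIV. cscale (c n) (ketbra (b n) (b n))) *v b m
      = (\<Sum>n\<in>UNIV. cscale (c n) (ketbra (b n) (b n)) *v b m)"
    by (rule matrix_vector_mult_sum_left)
  also have "\<dots> = (\<Sum>n\<in>UNIV. (c n * cinner (b n) (b m)) *s b n)"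
    by (intro sum.cong refl)
       (simp add: vec_eq_iff matrix_vector_mult_def cscale_def ketbra_def cinner_def sum_distrib_left mult_ac)
  also have "\<dots> = c m *s b m"
  proof -
    have "(c n * cinner (b n) (b m)) *s b n = (if n = m then c m *s b m else 0)" for n
      by (simp add: orthonormal)
    then show ?thesis by simp
  qed
  finally show ?thesis .
qed

lemma orthonormal_basis_sum_norm_squares_braket:
  fixes b :: "'n \<Rightarrow> complex^'n"
  assumes orthonormal: "\<And>i j. cinner (b i) (b j) = (if i = j then 1 else 0)"
  shows "of_real (\<Sum>n\<in>UNIV. (cmod (braket x (cadj B) (b n)))\<^sup>2) = braket x (cadj B ** B) x"
proof -
  have "cmod (braket x (cadj B) (b n)) = cmod (cinner (b n) (B *v x))" for n
    by (subst braket_cadj) (simp add: braket_def)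
  then show ?thesis
    using orthonormal_basis_sum_norm_squares[OF orthonormal, of "B *v x"]
    by (simp only: braket_cadj_mult)
qed

lemma eigenvector_Re_braket:
  assumes "A *v x = c *s x"
  shows "of_real (2 * Re (c * braket x (cadj C) x))
    = braket x (cadj C ** A) x + braket x (cadj A ** C) x"
proof -
  have "braket x (cadj C ** A) x = c * cinner (C *v x) x"
    by (simp add: braket_cadj_mult assms cinner_scale_right)
  also have "cinner (C *v x) x = braket x (cadj C) x"
    by (simp add: braket_def cinner_cadj)
  finally have "braket x (cadj C ** A) x = c * braket x (cadj C) x" .
  moreover have "braket x (cadj A ** C) x = cnj (braket x (cadj C ** A) x)"
    by (simp add: braket_cadj_mult cnj_cinner)
  ultimately show ?thesis
    by (simp only: complex_add_cnj)
qed

lemma row_sum_eq_0: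
  fixes A B C :: "'m::finite \<Rightarrow> complex^'n^'n" and b :: "'n \<Rightarrow> complex^'n"
  assumes gram: "(\<Sum>\<mu>\<in>UNIV. cadj (C \<mu>) ** A \<mu> + 2 *\<^sub>R (cadj (B \<mu>) ** B \<mu>)
            + cadj (A \<mu>) ** C \<mu>) = 0"
    and orthonormal: "\<And>i j. cinner (b i) (b j) = (if i = j then 1 else 0)"
    and eigen: "\<And>\<mu>. A \<mu> *v b n1 = c \<mu> *s b n1"
  shows "(\<Sum>n2\<in>UNIV. \<Sum>\<mu>\<in>UNIV. 2 * (cmod (braket (b n1) (cadj (B \<mu>)) (b n2)))\<^sup>2
       + (if n1 = n2 then 2 * Re (c \<mu> * braket (b n1) (cadj (C \<mu>)) (b n2)) else 0)) = 0"
    (is "?row = 0")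
proof -
  define x where "x = b n1"
  define S where "S \<mu> = (\<Sum>n2\<in>UNIV. (cmod (braket x (cadj (B \<mu>)) (b n2)))\<^sup>2)" for \<mu>
  have "?row = (\<Sum>\<mu>\<in>UNIV. 2 * S \<mu> + 2 * Re (c \<mu> * braket x (cadj (C \<mu>)) x))"
    by (subst sum.swap) (simp add: S_def sum.distrib sum_distrib_left x_def)
  also have "of_real \<dots> = (\<Sum>\<mu>\<in>UNIV. 2 *\<^sub>R of_real (S \<mu>)
      + of_real (2 * Re (c \<mu> * braket x (cadj (C \<mu>)) x)))"
    by (simp add: scaleR_conv_of_real)
  also have "\<dots> = (\<Sum>\<mu>\<in>UNIV. 2 *\<^sub>R braket x (cadj (B \<mu>) ** B \<mu>) x
      + (braket x (cadj (C \<mu>) ** A \<mu>) x + braket x (cadj (A \<mu>) ** C \<mu>) x))"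
    unfolding S_def x_def
    by (simp only: orthonormal_basis_sum_norm_squares_braket[OF orthonormal]
        eigenvector_Re_braket[OF eigen])
  also have "\<dots> = braket x (\<Sum>\<mu>\<in>UNIV. cadj (C \<mu>) ** A \<mu> + 2 *\<^sub>R (cadj (B \<mu>) ** B \<mu>)
            + cadj (A \<mu>) ** C \<mu>) x"
    by (simp only: braket_sum braket_add braket_scaleR add_ac)
  finally show ?thesis
    by (simp only: gram braket_zero of_real_eq_0_iff)
qed

definition rate_matrix :: "real^'n^'n \<Rightarrow> bool" where
  "rate_matrix R \<longleftrightarrow> (\<forall>i j. i \<noteq> j \<longrightarrow> 0 \<le> R $ i $ j) \<and> (\<forall>i. (\<Sum>j\<in>UNIV. R $ i $ j) = 0)"

lemma rate_matrix_diag: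
  assumes "rate_matrix R"
  shows "R $ i $ i = - (\<Sum>j\<in>UNIV - {i}. R $ i $ j)"
  using assms sum.remove[of UNIV i "\<lambda>j. R $ i $ j"] by (simp add: rate_matrix_def)

lemma rate_matrix_diag_nonpos:
  assumes "rate_matrix R"
  shows "R $ i $ i \<le> 0"
proof -
  have "0 \<le> (\<Sum>j\<in>UNIV - {i}. R $ i $ j)"
    using assms by (intro sum_nonneg) (simp add: rate_matrix_def)
  then show ?thesis
    using rate_matrix_diag[OF assms, of i] by linarith
qed

lemma rate_matrix_trace_le_diag:
  assumes "rate_matrix R"
  shows "trace R \<le> R $ i $ i"
proof -
  have "trace R = R $ i $ i + (\<Sum>j\<in>UNIV - {i}. R $ j $ j)"
    unfolding trace_def by (rule sum.remove) auto
  moreover have "(\<Sum>j\<in>UNIV - {i}. R $ j $ j) \<le> 0"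
    by (intro sum_nonpos rate_matrix_diag_nonpos[OF assms])
  ultimately show ?thesis by linarith
qed

lemma rate_matrix_trace_eq_0_imp_eq_0:
  assumes "rate_matrix R" and "trace R = 0"
  shows "R = 0"
proof -
  have diag: "R $ i $ i = 0" for i
    using rate_matrix_trace_le_diag[OF assms(1), of i] rate_matrix_diag_nonpos[OF assms(1), of i]
      assms(2) by linarith
  have "R $ i $ j = 0" if "i \<noteq> j" for i j
  proof -
    have "(\<Sum>k\<in>UNIV - {i}. R $ i $ k) = 0"
      using rate_matrix_diag[OF assms(1), of i] diag[of i] by simp
    moreover have "\<forall>k\<in>UNIV - {i}. 0 \<le> R $ i $ k"
      using assms(1) by (simp add: rate_matrix_def)
    ultimately show ?thesis
      using that sum_nonneg_eq_0_iff[of "UNIV - {i}" "\<lambda>k. R $ i $ k"] by simp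
  qed
  with diag show ?thesis by (metis vec_eq_iff zero_index)
qed

lemma rate_matrix_trace_neg:
  assumes "rate_matrix R" and "R \<noteq> 0"
  shows "trace R < 0"
proof -
  have "trace R \<le> 0"
    using rate_matrix_trace_le_diag[OF assms(1)] rate_matrix_diag_nonpos[OF assms(1)] by (meson order_trans)
  with rate_matrix_trace_eq_0_imp_eq_0[OF assms(1)] assms(2) show ?thesis by fastforce
qed

lemma stochastic_of_rate_matrix:
  assumes "rate_matrix R" and "R \<noteq> 0"
  defines "P \<equiv> mat 1 - (1 / trace R) *\<^sub>R R"
  shows "0 \<le> P $ i $ j" and "(\<Sum>j\<in>UNIV. P $ i $ j) = 1"
proof -
  have t: "trace R < 0" by (rule rate_matrix_trace_neg[OF assms(1,2)])
  show "0 \<le> P $ i $ j"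
  proof (cases "i = j")
    case True
    then show ?thesis
      using rate_matrix_trace_le_diag[OF assms(1), of i] t by (simp add: P_def mat_def divide_le_eq_1)
  next
    case False
    then show ?thesis
      using assms(1) t by (simp add: P_def mat_def rate_matrix_def divide_le_0_iff)
  qed
  have "(\<Sum>j\<in>UNIV. P $ i $ j) = (\<Sum>j\<in>UNIV. (if i = j then 1 else 0) - R $ i $ j / trace R)"
    by (simp add: P_def mat_def)
  also have "\<dots> = 1 - (\<Sum>j\<in>UNIV. R $ i $ j) / trace R"
    by (simp add: sum_subtractf sum_divide_distrib)
  finally show "(\<Sum>j\<in>UNIV. P $ i $ j) = 1"
    using assms(1) by (simp add: rate_matrix_def)
qed

theorem lemma1:
  fixes M M1 M2 :: "'m::finite \<Rightarrow> real \<Rightarrow> complex^'n^'n"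
    and b :: "'n \<Rightarrow> complex^'n"
    and c :: "'m \<Rightarrow> 'n \<Rightarrow> complex"
    and R :: "real^'n^'n"
  assumes complete: "\<And>u. (\<Sum>\<mu>\<in>UNIV. cadj (M \<mu> u) ** M \<mu> u) = mat 1"
    and deriv1: "\<And>\<mu> u. (M \<mu> has_vector_derivative M1 \<mu> u) (at u)"
    and deriv2: "\<And>\<mu> u. (M1 \<mu> has_vector_derivative M2 \<mu> u) (at u)"
    and cont2: "\<And>\<mu>. continuous_on UNIV (M2 \<mu>)"
    and orthonormal: "\<And>i j. cinner (b i) (b j) = (if i = j then 1 else 0)"
    and diag: "\<And>\<mu>. M \<mu> 0 = (\<Sum>n\<in>UNIV. cscale (c \<mu> n) (ketbra (b n) (b n)))"
    and R_def: "R = (\<chi> n1 n2. \<Sum>\<mu>\<in>UNIV.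
                   2 * (cmod (braket (b n1) (cadj (M1 \<mu> 0)) (b n2)))\<^sup>2
                 + (if n1 = n2 then 2 * Re (c \<mu> n1 * braket (b n1) (cadj (M2 \<mu> 0)) (b n2)) else 0))"
    and R_nz: "R \<noteq> 0"
  shows "trace R \<noteq> 0
     \<and> (let P = mat 1 - (1 / trace R) *\<^sub>R R in
          (\<forall>i j. 0 \<le> P $ i $ j) \<and> (\<forall>i. (\<Sum>j\<in>UNIV. P $ i $ j) = 1))"
proof -
  have gram: "(\<Sum>\<mu>\<in>UNIV. cadj (M2 \<mu> 0) ** M \<mu> 0 + 2 *\<^sub>R (cadj (M1 \<mu> 0) ** M1 \<mu> 0)
      + cadj (M \<mu> 0) ** M2 \<mu> 0) = 0"
    by (rule gram_sum_second_derivative_eq_0[OF complete deriv1 deriv2])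
  have eigen: "M \<mu> 0 *v b n = c \<mu> n *s b n" for \<mu> n
    unfolding diag by (rule ketbra_diagonal_mult_basis[OF orthonormal])
  have rate: "rate_matrix R"
    unfolding rate_matrix_def
  proof (intro conjI allI impI)
    show "0 \<le> R $ i $ j" if "i \<noteq> j" for i j
      using that by (simp add: R_def sum_nonneg)
    show "(\<Sum>j\<in>UNIV. R $ i $ j) = 0" for i
      using row_sum_eq_0[OF gram orthonormal eigen, of i] by (simp add: R_def)
  qed
  have "trace R < 0"
    by (rule rate_matrix_trace_neg[OF rate R_nz])
  then show ?thesis
    using stochastic_of_rate_matrix[OF rate R_nz] by (simp add: Let_def)
qed

end
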